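(* Let $n\geqslant 1$, let $A=\{g,e_1,\ldots,e_n\}$ and let $R$ be the set of monoid relations on $A$: (R1) $g^n=1$; (R2) $e_i^2=e_i$ for $1\leqslant i\leqslant n$; (R3) $e_ie_j=e_je_i$ for $1\leqslant i<j\leqslant n$; (R4) $ge_1=e_ng$ and $ge_{i+1}=e_ig$ for $1\leqslant i\leqslant n-1$; (R5) $ge_1e_2\cdots e_n=e_1e_2\cdots e_n$. Then $\langle A\mid R\rangle$ is a monoid presentation of $\mathcal{CI}_n$ (with respect to the map sending the letter $g$ to the permutation $g$ and each letter $e_i$ to the partial identity $e_i$). It has $n+1$ generators and $\frac12(n^2+3n+4)$ relations.
   Context: Let $\Omega_n=\{1,\ldots,n\}$, $\mathcal{I}_n$ the symmetric inverse monoid on $\Omega_n$ (maps on the right, composed left to right). $g$ is the permutation $ig=i+1$ ($1\leqslant i\leqslant n-1$), $ng=1$; $\mathcal{C}_n=\{1,g,\ldots,g^{n-1}\}$; $\mathcal{CI}_n=\{\alpha\in\mathcal{I}_n\mid \alpha=\sigma|_{\mathrm{Dom}(\alpha)}\text{ for some }\sigma\in\mathcal{C}_n\}$; $e_i$ is the partial identity on $\Omega_n\setminus\{i\}$. A presentation $\langle A\mid R\rangle$ defines a monoid $M$ via a map $\phi:A\to M$ if $\phi$ is injective, $A\phi$ generates $M$, and the induced homomorphism $A^*\to M$ has kernel equal to the smallest congruence on the free monoid $A^*$ containing $R$. *)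

theory Defs
  imports Main
begin

text \<open>Partial injections on Omega_n = {1..n} are modelled as partial maps
  nat \<rightharpoonup> nat that are undefined outside {1..n}.  Maps act on the right and are
  composed left to right: (alpha * beta) x = beta (alpha x).\<close>

definition pmult :: "(nat \<rightharpoonup> nat) \<Rightarrow> (nat \<rightharpoonup> nat) \<Rightarrow> (nat \<rightharpoonup> nat)" where
  "pmult \<alpha> \<beta> = \<beta> \<circ>\<^sub>m \<alpha>"

definition pid :: "nat \<Rightarrow> (nat \<rightharpoonup> nat)" where
  "pid n = (\<lambda>i. if 1 \<le> i \<and> i \<le> n then Some i else None)"

definition gperm :: "nat \<Rightarrow> (nat \<rightharpoonup> nat)" where
  "gperm n = (\<lambda>i. if 1 \<le> i \<and> i < n then Some (i + 1) else if i = n \<and> 1 \<le> n then Some 1 else None)"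

definition ppow :: "nat \<Rightarrow> (nat \<rightharpoonup> nat) \<Rightarrow> nat \<Rightarrow> (nat \<rightharpoonup> nat)" where
  "ppow n \<alpha> k = ((\<lambda>\<beta>. pmult \<beta> \<alpha>) ^^ k) (pid n)"

definition eid :: "nat \<Rightarrow> nat \<Rightarrow> (nat \<rightharpoonup> nat)" where
  "eid n i = (\<lambda>j. if 1 \<le> j \<and> j \<le> n \<and> j \<noteq> i then Some j else None)"

definition Cn :: "nat \<Rightarrow> (nat \<rightharpoonup> nat) set" where
  "Cn n = {ppow n (gperm n) k | k. k < n}"

definition CIn :: "nat \<Rightarrow> (nat \<rightharpoonup> nat) set" where
  "CIn n = {\<sigma> |` D | \<sigma> D. \<sigma> \<in> Cn n \<and> D \<subseteq> {1..n}}"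

inductive_set cong_closure :: "'a set \<Rightarrow> ('a list \<times> 'a list) set \<Rightarrow> ('a list \<times> 'a list) set"
  for A R where
  base: "(u, v) \<in> R \<Longrightarrow> (u, v) \<in> cong_closure A R"
| refl: "u \<in> lists A \<Longrightarrow> (u, u) \<in> cong_closure A R"
| sym: "(u, v) \<in> cong_closure A R \<Longrightarrow> (v, u) \<in> cong_closure A R"
| trans: "(u, v) \<in> cong_closure A R \<Longrightarrow> (v, w) \<in> cong_closure A R \<Longrightarrow> (u, w) \<in> cong_closure A R"
| ctxt: "(u, v) \<in> cong_closure A R \<Longrightarrow> x \<in> lists A \<Longrightarrow> y \<in> lists A \<Longrightarrow>
         (x @ u @ y, x @ v @ y) \<in> cong_closure A R"

definition defines_monoid ::
  "'a set \<Rightarrow> ('a list \<times> 'a list) set \<Rightarrow> ('b \<Rightarrow> 'b \<Rightarrow> 'b) \<Rightarrow> 'b \<Rightarrow> 'b set \<Rightarrow> ('a \<Rightarrow> 'b) \<Rightarrow> bool" where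
  "defines_monoid A R mult one M \<phi> \<longleftrightarrow>
     R \<subseteq> lists A \<times> lists A \<and>
     inj_on \<phi> A \<and> \<phi> ` A \<subseteq> M \<and>
     {foldl mult one (map \<phi> w) | w. w \<in> lists A} = M \<and>
     (\<forall>u \<in> lists A. \<forall>v \<in> lists A.
        foldl mult one (map \<phi> u) = foldl mult one (map \<phi> v) \<longleftrightarrow> (u, v) \<in> cong_closure A R)"

datatype letter = G | E nat

definition alph :: "nat \<Rightarrow> letter set" where
  "alph n = insert G (E ` {1..n})"

definition phi :: "nat \<Rightarrow> letter \<Rightarrow> (nat \<rightharpoonup> nat)" where
  "phi n a = (case a of G \<Rightarrow> gperm n | E i \<Rightarrow> eid n i)"

definition R1 :: "nat \<Rightarrow> (letter list \<times> letter list) set" where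
  "R1 n = {(replicate n G, [])}"
definition R2 :: "nat \<Rightarrow> (letter list \<times> letter list) set" where
  "R2 n = {([E i, E i], [E i]) | i. 1 \<le> i \<and> i \<le> n}"
definition R3 :: "nat \<Rightarrow> (letter list \<times> letter list) set" where
  "R3 n = {([E i, E j], [E j, E i]) | i j. 1 \<le> i \<and> i < j \<and> j \<le> n}"
definition R4 :: "nat \<Rightarrow> (letter list \<times> letter list) set" where
  "R4 n = insert ([G, E 1], [E n, G]) {([G, E (i + 1)], [E i, G]) | i. 1 \<le> i \<and> i \<le> n - 1}"
definition R5 :: "nat \<Rightarrow> (letter list \<times> letter list) set" where
  "R5 n = {(G # map E [1..<n+1], map E [1..<n+1])}"

definition Rel :: "nat \<Rightarrow> (letter list \<times> letter list) set" where
  "Rel n = R1 n \<union> R2 n \<union> R3 n \<union> R4 n \<union> R5 n"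

end

theory Submission
  imports Defs
begin

text \<open>Every word over g, e_1, ..., e_n is congruent to a normal form g^k e_X, where e_X is the
  product of the e_i with i \<in> X in increasing order: R4 moves each e_i to the right of the
  g's (shifting its index), R2 and R3 sort the idempotents, R1 reduces k below n, and R5 absorbs
  the g's standing in front of the zero e_1 \<cdots> e_n.  The value of g^k e_X is the rotation by k
  restricted to the points not sent into X; with k < n, and k = 0 when X = \<Omega>_n, distinct normal
  forms have distinct values, and every element of \<C>\<I>_n is such a value.  So two words with
  equal values are congruent to one and the same normal form.\<close>

lemma cong_closure_append_left:
  "(u, v) \<in> cong_closure A R \<Longrightarrow> x \<in> lists A \<Longrightarrow> (x @ u, x @ v) \<in> cong_closure A R"
  using cong_closure.ctxt[of u v A R x "[]"] by simp

lemma cong_closure_append_right: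
  "(u, v) \<in> cong_closure A R \<Longrightarrow> y \<in> lists A \<Longrightarrow> (u @ y, v @ y) \<in> cong_closure A R"
  using cong_closure.ctxt[of u v A R "[]" y] by simp

lemma cong_closure_subset_kernel:
  assumes "(u, v) \<in> cong_closure A R"
    and "\<And>u v. (u, v) \<in> R \<Longrightarrow> h u = h v"
    and "\<And>x u v y. h u = h v \<Longrightarrow> h (x @ u @ y) = h (x @ v @ y)"
  shows "h u = h v"
  using assms(1) by (induction rule: cong_closure.induct) (auto intro: assms(2,3))

declare cong_closure.trans [trans]

lemma pmult_assoc: "pmult (pmult a b) c = pmult a (pmult b c)"
  by (simp add: pmult_def map_comp_def fun_eq_iff split: option.split)

lemma foldl_pmult_assoc: "foldl pmult (pmult a b) l = pmult a (foldl pmult b l)"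
  by (induction l arbitrary: b) (simp_all add: pmult_assoc)

lemma pmult_pid_right: "ran a \<subseteq> {1..n} \<Longrightarrow> pmult a (pid n) = a"
  by (auto simp: ran_def pmult_def map_comp_def pid_def fun_eq_iff split: option.split)

lemma ran_pmult: "ran (pmult a b) \<subseteq> ran b"
  by (auto simp: ran_def pmult_def map_comp_def split: option.splits)

lemma ran_phi: "ran (phi n c) \<subseteq> {1..n}"
  by (auto simp: ran_def phi_def gperm_def eid_def split: letter.splits if_splits)

definition word_map :: "nat \<Rightarrow> letter list \<Rightarrow> (nat \<rightharpoonup> nat)" where
  "word_map n w = foldl pmult (pid n) (map (phi n) w)"

lemma ran_word_map: "ran (word_map n w) \<subseteq> {1..n}"
proof -
  have step: "ran (foldl pmult a (map (phi n) w)) \<subseteq> {1..n}" if "ran a \<subseteq> {1..n}" for a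
    using that
  proof (induction w arbitrary: a)
    case (Cons c w)
    then show ?case using Cons.IH[OF order_trans[OF ran_pmult ran_phi]] by simp
  qed simp
  have "ran (pid n) \<subseteq> {1..n}"
    by (auto simp: ran_def pid_def split: if_splits)
  then show ?thesis
    unfolding word_map_def by (rule step)
qed

lemma word_map_Nil [simp]: "word_map n [] = pid n"
  by (simp add: word_map_def)

lemma word_map_append: "word_map n (u @ v) = pmult (word_map n u) (word_map n v)"
proof -
  have "word_map n (u @ v) = foldl pmult (pmult (word_map n u) (pid n)) (map (phi n) v)"
    using pmult_pid_right[OF ran_word_map] by (simp add: word_map_def)
  then show ?thesis
    by (simp add: foldl_pmult_assoc word_map_def)
qed

lemma word_map_single: "word_map n [c] = phi n c"
  by (auto simp: word_map_def pmult_def map_comp_def pid_def phi_def gperm_def eid_def fun_eq_iff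
      split: letter.splits option.splits)

lemma word_map_Cons: "word_map n (c # w) = pmult (phi n c) (word_map n w)"
  using word_map_append[of n "[c]" w] by (simp add: word_map_single)

lemma word_map_map_E:
  "word_map n (map E l) = (\<lambda>d. if d \<in> {1..n} \<and> d \<notin> set l then Some d else None)"
  by (induction l)
    (auto simp: word_map_Cons pid_def pmult_def phi_def eid_def fun_eq_iff map_comp_def)

section \<open>Rotations\<close>

text \<open>\<open>rot n k d\<close> is the image of d under g^k.\<close>

definition rot :: "nat \<Rightarrow> nat \<Rightarrow> nat \<Rightarrow> nat" where
  "rot n k d = (d - 1 + k) mod n + 1"

definition rot_on :: "nat \<Rightarrow> nat set \<Rightarrow> nat \<Rightarrow> (nat \<rightharpoonup> nat)" where
  "rot_on n D k = (\<lambda>d. if d \<in> D then Some (rot n k d) else None)"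

lemma rot_in_range: "n \<ge> 1 \<Longrightarrow> rot n k d \<in> {1..n}"
  by (simp add: rot_def) (meson Suc_leI mod_less_divisor not_le not_less_eq_eq)

lemma rot_rot: "d \<ge> 1 \<Longrightarrow> rot n b (rot n a d) = rot n (a + b) d"
  by (simp add: rot_def mod_add_left_eq add.assoc)

lemma rot_0: "d \<in> {1..n} \<Longrightarrow> rot n 0 d = d"
  by (auto simp: rot_def)

lemma rot_n: "d \<in> {1..n} \<Longrightarrow> rot n n d = d"
proof -
  assume d: "d \<in> {1..n}"
  then have "d - 1 < n" by auto
  then have "(d - 1 + n) mod n = d - 1" by simp
  with d show ?thesis by (simp add: rot_def)
qed

lemma rot_rot_inverse: "d \<in> {1..n} \<Longrightarrow> k \<le> n \<Longrightarrow> rot n k (rot n (n - k) d) = d"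
  by (simp add: rot_rot rot_n)

lemma rot_inverse_rot: "d \<in> {1..n} \<Longrightarrow> k \<le> n \<Longrightarrow> rot n (n - k) (rot n k d) = d"
  by (simp add: rot_rot rot_n)

lemma rot_inj_exponent:
  assumes d: "d \<in> {1..n}" and ab: "a < n" "b < n" and eq: "rot n a d = rot n b d"
  shows "a = b"
proof -
  have cancel: "x = y" if "(d - 1 + x) mod n = (d - 1 + y) mod n" "y \<le> x" "x < n" for x y
  proof -
    have "n dvd (d - 1 + x) - (d - 1 + y)"
      using that(1,2) by (simp add: mod_eq_dvd_iff_nat)
    then have "n dvd x - y" by simp
    moreover have "x - y < n" using that(3) by simp
    ultimately have "x - y = 0" by (metis dvd_imp_le neq0_conv not_le)
    with that(2) show "x = y" by simp
  qed
  have "(d - 1 + a) mod n = (d - 1 + b) mod n"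
    using eq by (simp add: rot_def)
  then show ?thesis
    using ab cancel[of a b] cancel[of b a] by (cases "b \<le> a") simp_all
qed

lemma gperm_eq_rot_on: "n \<ge> 1 \<Longrightarrow> gperm n = rot_on n {1..n} 1"
  by (auto simp: gperm_def rot_on_def rot_def fun_eq_iff)

lemma pid_eq_rot_on: "pid n = rot_on n {1..n} 0"
  by (simp add: pid_def rot_on_def rot_0 fun_eq_iff)

lemma pmult_rot_on:
  "n \<ge> 1 \<Longrightarrow> D \<subseteq> {1..n} \<Longrightarrow> pmult (rot_on n D a) (rot_on n {1..n} b) = rot_on n D (a + b)"
  using rot_in_range[of n a] by (auto simp: pmult_def rot_on_def rot_rot fun_eq_iff)

lemma word_map_replicate_G: "n \<ge> 1 \<Longrightarrow> word_map n (replicate k G) = rot_on n {1..n} k"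
proof (induction k)
  case (Suc k)
  then show ?case
    using pmult_rot_on[OF Suc.prems order.refl, of 1 k]
    by (simp add: word_map_Cons phi_def gperm_eq_rot_on)
qed (simp add: pid_eq_rot_on)

lemma ppow_gperm: "n \<ge> 1 \<Longrightarrow> ppow n (gperm n) k = rot_on n {1..n} k"
proof (induction k)
  case (Suc k)
  then show ?case
    using pmult_rot_on[OF Suc.prems order.refl, of k 1]
    by (simp add: ppow_def gperm_eq_rot_on)
qed (simp add: ppow_def pid_eq_rot_on)

section \<open>Normal forms\<close>

definition idem_word :: "nat \<Rightarrow> nat set \<Rightarrow> letter list" where
  "idem_word n X = map E (filter (\<lambda>i. i \<in> X) [1..<Suc n])"

definition nf_word :: "nat \<Rightarrow> nat \<Rightarrow> nat set \<Rightarrow> letter list" where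
  "nf_word n k X = replicate k G @ idem_word n X"

definition nf_map :: "nat \<Rightarrow> nat \<Rightarrow> nat set \<Rightarrow> (nat \<rightharpoonup> nat)" where
  "nf_map n k X = rot_on n {d \<in> {1..n}. rot n k d \<notin> X} k"

definition normal_pair :: "nat \<Rightarrow> nat \<Rightarrow> nat set \<Rightarrow> bool" where
  "normal_pair n k X \<longleftrightarrow> k < n \<and> X \<subseteq> {1..n} \<and> (X = {1..n} \<longrightarrow> k = 0)"

lemma word_map_idem_word:
  "word_map n (idem_word n X) = (\<lambda>d. if d \<in> {1..n} \<and> d \<notin> X then Some d else None)"
  by (auto simp: idem_word_def word_map_map_E fun_eq_iff)

lemma word_map_nf_word: "n \<ge> 1 \<Longrightarrow> word_map n (nf_word n k X) = nf_map n k X"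
  using rot_in_range[of n k]
  by (auto simp: nf_word_def word_map_append word_map_replicate_G word_map_idem_word
      nf_map_def rot_on_def pmult_def map_comp_def fun_eq_iff)

lemma nf_map_in_CIn: assumes n: "n \<ge> 1" and k: "k < n" shows "nf_map n k X \<in> CIn n"
proof -
  have "nf_map n k X = ppow n (gperm n) k |` {d \<in> {1..n}. rot n k d \<notin> X}"
    by (auto simp: ppow_gperm[OF n] nf_map_def rot_on_def restrict_map_def fun_eq_iff)
  moreover have "ppow n (gperm n) k \<in> Cn n"
    using k by (auto simp: Cn_def)
  ultimately show ?thesis
    unfolding CIn_def by blast
qed

lemma CIn_eq_nf_map:
  assumes n: "n \<ge> 1" and \<alpha>: "\<alpha> \<in> CIn n"
  shows "\<exists>k X. k < n \<and> nf_map n k X = \<alpha>"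
proof -
  obtain k D where \<alpha>_eq: "\<alpha> = ppow n (gperm n) k |` D" and k: "k < n" and D: "D \<subseteq> {1..n}"
    using \<alpha> by (auto simp: CIn_def Cn_def)
  have "nf_map n k {d \<in> {1..n}. rot n (n - k) d \<notin> D} = \<alpha>"
    using D rot_in_range[OF n, of k] rot_inverse_rot[of _ n k] k
    by (auto simp: \<alpha>_eq nf_map_def ppow_gperm[OF n] rot_on_def restrict_map_def fun_eq_iff)
  with k show ?thesis by blast
qed

lemma nf_map_at_preimage:
  "n \<ge> 1 \<Longrightarrow> y \<in> {1..n} \<Longrightarrow> k \<le> n \<Longrightarrow>
    nf_map n k X (rot n (n - k) y) = (if y \<in> X then None else Some y)"
  using rot_in_range[of n "n - k" y] by (simp add: nf_map_def rot_on_def rot_rot_inverse)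

lemma nf_map_inj:
  assumes n: "n \<ge> 1" and nf: "normal_pair n k X" "normal_pair n k' X'"
    and eq: "nf_map n k X = nf_map n k' X'"
  shows "k = k' \<and> X = X'"
proof (cases "X = {1..n}")
  case True
  have empty: "nf_map n k' X' = Map.empty"
    using eq True nf(1) rot_in_range[OF n] by (auto simp: normal_pair_def nf_map_def rot_on_def)
  have "y \<in> X'" if "y \<in> {1..n}" for y
    using fun_cong[OF empty, of "rot n (n - k') y"] nf_map_at_preimage[OF n that, of k' X'] nf(2)
    by (auto simp: normal_pair_def split: if_splits)
  then have "X' = {1..n}"
    using nf(2) by (auto simp: normal_pair_def)
  with True nf show ?thesis by (simp add: normal_pair_def)
next
  case False
  then obtain y where y: "y \<in> {1..n}" "y \<notin> X" using nf(1) unfolding normal_pair_def by blast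
  define x where "x = rot n (n - k) y"
  have "nf_map n k' X' x = Some y"
    using eq nf_map_at_preimage[OF n y(1), of k X] nf(1) y(2) by (simp add: x_def normal_pair_def)
  then have "rot n k' x = y" "x \<in> {1..n}"
    by (auto simp: nf_map_def rot_on_def split: if_splits)
  moreover have "rot n k x = y"
    using y nf(1) by (simp add: x_def rot_rot_inverse normal_pair_def)
  ultimately have kk: "k = k'"
    using rot_inj_exponent nf by (metis normal_pair_def)
  have "z \<in> X \<longleftrightarrow> z \<in> X'" if "z \<in> {1..n}" for z
    using nf_map_at_preimage[OF n that, of k X] nf_map_at_preimage[OF n that, of k X'] eq kk nf
    by (auto simp: normal_pair_def split: if_splits)
  with nf kk show ?thesis by (auto simp: normal_pair_def)
qed

section \<open>Rewriting words into normal form\<close>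

abbreviation rel_cong :: "nat \<Rightarrow> letter list \<Rightarrow> letter list \<Rightarrow> bool" where
  "rel_cong n u v \<equiv> (u, v) \<in> cong_closure (alph n) (Rel n)"

lemma Rel_lists: "n \<ge> 1 \<Longrightarrow> Rel n \<subseteq> lists (alph n) \<times> lists (alph n)"
  by (auto simp: Rel_def R1_def R2_def R3_def R4_def R5_def alph_def)

lemma replicate_G_lists: "replicate k G \<in> lists (alph n)"
  by (auto simp: alph_def)

lemma idem_word_lists: "idem_word n X \<in> lists (alph n)"
  by (auto simp: idem_word_def alph_def)

lemma nf_word_lists: "nf_word n k X \<in> lists (alph n)"
  by (simp add: nf_word_def idem_word_lists replicate_G_lists)

lemma E_Cons_sorted_filter:
  "sorted_wrt (<) l \<Longrightarrow> j \<in> set l \<Longrightarrow> set l \<subseteq> {1..n} \<Longrightarrow>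
    rel_cong n (E j # map E (filter (\<lambda>i. i \<in> X) l)) (map E (filter (\<lambda>i. i \<in> insert j X) l))"
proof (induction l)
  case Nil
  then show ?case by simp
next
  case (Cons b l)
  let ?w = "map E (filter (\<lambda>i. i \<in> X) l)"
  have b: "\<forall>x \<in> set l. b < x" "sorted_wrt (<) l" "b \<in> {1..n}" "set l \<subseteq> {1..n}"
    using Cons.prems by auto
  have w: "?w \<in> lists (alph n)" and Eb: "[E b] \<in> lists (alph n)"
    using b(3,4) by (force simp: alph_def)+
  show ?case
  proof (cases "j = b")
    case True
    then have "filter (\<lambda>i. i \<in> insert j X) l = filter (\<lambda>i. i \<in> X) l"
      using b(1) by (intro filter_cong) auto
    moreover have "rel_cong n ([E b, E b] @ ?w) ([E b] @ ?w)" if "b \<in> X"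
      using b(3) by (intro cong_closure_append_right[OF cong_closure.base w]) (simp add: Rel_def R2_def)
    moreover have "rel_cong n (E b # ?w) (E b # ?w)"
      using Eb w by (intro cong_closure.refl) simp
    ultimately show ?thesis using True by auto
  next
    case False
    then have j: "j \<in> set l" "b < j" using Cons.prems b(1) by auto
    have IH: "rel_cong n (E j # ?w) (map E (filter (\<lambda>i. i \<in> insert j X) l))"
      using Cons.IH[OF b(2) j(1)] b(4) by simp
    show ?thesis
    proof (cases "b \<in> X")
      case True
      have "([E b, E j], [E j, E b]) \<in> Rel n"
        using b(3,4) j by (auto simp: Rel_def R3_def)
      from cong_closure_append_right[OF cong_closure.sym[OF cong_closure.base[OF this]] w]
      have "rel_cong n (E j # E b # ?w) (E b # E j # ?w)" by simp
      also have "rel_cong n (E b # E j # ?w) (E b # map E (filter (\<lambda>i. i \<in> insert j X) l))"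
        using cong_closure_append_left[OF IH Eb] by simp
      finally show ?thesis using True by simp
    next
      case False
      with IH \<open>j \<noteq> b\<close> show ?thesis by simp
    qed
  qed
qed

lemma E_Cons_idem_word: "j \<in> {1..n} \<Longrightarrow> rel_cong n (E j # idem_word n X) (idem_word n (insert j X))"
  unfolding idem_word_def by (rule E_Cons_sorted_filter[OF sorted_wrt_upt]) auto

lemma E_G_shift:
  assumes i: "i \<in> {1..n}"
  shows "\<exists>j \<in> {1..n}. rel_cong n [E i, G] [G, E j]"
proof -
  define j where "j = (if i < n then i + 1 else 1)"
  have "([G, E j], [E i, G]) \<in> Rel n"
    using i by (auto simp: j_def Rel_def R4_def)
  then have "rel_cong n [E i, G] [G, E j]"
    by (rule cong_closure.sym[OF cong_closure.base])
  moreover have "j \<in> {1..n}"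
    using i by (auto simp: j_def)
  ultimately show ?thesis by blast
qed

lemma E_replicate_G_shift:
  "i \<in> {1..n} \<Longrightarrow> \<exists>j \<in> {1..n}. rel_cong n (E i # replicate k G) (replicate k G @ [E j])"
proof (induction k arbitrary: i)
  case 0
  then show ?case by (auto intro!: bexI[of _ i] cong_closure.refl simp: alph_def)
next
  case (Suc k)
  obtain j where j: "j \<in> {1..n}" "rel_cong n [E i, G] [G, E j]"
    using E_G_shift[OF Suc.prems] by blast
  obtain j' where j': "j' \<in> {1..n}" "rel_cong n (E j # replicate k G) (replicate k G @ [E j'])"
    using Suc.IH[OF j(1)] by blast
  have "rel_cong n (E i # G # replicate k G) (G # E j # replicate k G)"
    using cong_closure_append_right[OF j(2) replicate_G_lists] by simp
  also have "rel_cong n (G # E j # replicate k G) (G # replicate k G @ [E j'])"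
    using cong_closure_append_left[OF j'(2), of "[G]"] by (simp add: alph_def)
  finally show ?case using j'(1) by auto
qed

lemma replicate_G_idem_word_full:
  "n \<ge> 1 \<Longrightarrow> rel_cong n (replicate k G @ idem_word n {1..n}) (idem_word n {1..n})"
proof (induction k)
  case 0
  then show ?case by (simp add: cong_closure.refl idem_word_lists)
next
  case (Suc k)
  have "rel_cong n (G # idem_word n {1..n}) (idem_word n {1..n})"
    by (rule cong_closure.base) (simp add: Rel_def R5_def idem_word_def)
  from cong_closure_append_left[OF this replicate_G_lists, of k]
  have "rel_cong n (replicate (Suc k) G @ idem_word n {1..n}) (replicate k G @ idem_word n {1..n})"
    by (simp add: replicate_append_same[symmetric])
  also note Suc.IH[OF Suc.prems]
  finally show ?case .
qed

lemma G_Cons_nf_word: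
  assumes n: "n \<ge> 1" and nf: "normal_pair n k X"
  shows "\<exists>k' X'. normal_pair n k' X' \<and> rel_cong n (G # nf_word n k X) (nf_word n k' X')"
proof (cases "X = {1..n} \<or> Suc k = n")
  case True
  have "rel_cong n (G # nf_word n k X) (nf_word n 0 X)"
  proof (cases "X = {1..n}")
    case True
    then show ?thesis using replicate_G_idem_word_full[OF n, of "Suc k"] by (simp add: nf_word_def)
  next
    case False
    then have "replicate n G = G # replicate k G" using \<open>X = {1..n} \<or> Suc k = n\<close> by auto
    moreover have "rel_cong n (replicate n G @ idem_word n X) ([] @ idem_word n X)"
      by (intro cong_closure_append_right[OF cong_closure.base idem_word_lists])
        (simp add: Rel_def R1_def)
    ultimately show ?thesis by (simp add: nf_word_def)
  qed
  with n nf show ?thesis by (intro exI[of _ 0] exI[of _ X]) (auto simp: normal_pair_def)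
next
  case False
  with nf have "normal_pair n (Suc k) X" by (auto simp: normal_pair_def)
  moreover have "rel_cong n (G # nf_word n k X) (nf_word n (Suc k) X)"
    using cong_closure.refl[OF nf_word_lists[of n "Suc k" X]] by (simp add: nf_word_def)
  ultimately show ?thesis by blast
qed

lemma E_Cons_nf_word:
  assumes n: "n \<ge> 1" and i: "i \<in> {1..n}" and nf: "normal_pair n k X"
  shows "\<exists>k' X'. normal_pair n k' X' \<and> rel_cong n (E i # nf_word n k X) (nf_word n k' X')"
proof -
  obtain j where j: "j \<in> {1..n}" "rel_cong n (E i # replicate k G) (replicate k G @ [E j])"
    using E_replicate_G_shift[OF i] by blast
  have "rel_cong n (E i # nf_word n k X) (replicate k G @ E j # idem_word n X)"
    using cong_closure_append_right[OF j(2) idem_word_lists[of n X]] by (simp add: nf_word_def)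
  also have "rel_cong n (replicate k G @ E j # idem_word n X) (nf_word n k (insert j X))"
    unfolding nf_word_def by (rule cong_closure_append_left[OF E_Cons_idem_word[OF j(1)] replicate_G_lists])
  finally have to_nf: "rel_cong n (E i # nf_word n k X) (nf_word n k (insert j X))" .
  show ?thesis
  proof (cases "insert j X = {1..n}")
    case True
    note to_nf
    also have "rel_cong n (nf_word n k (insert j X)) (nf_word n 0 (insert j X))"
      using replicate_G_idem_word_full[OF n, of k] True by (simp add: nf_word_def)
    finally have "rel_cong n (E i # nf_word n k X) (nf_word n 0 (insert j X))" .
    with True n show ?thesis by (intro exI[of _ 0] exI[of _ "insert j X"]) (auto simp: normal_pair_def)
  next
    case False
    with nf j(1) to_nf show ?thesis
      by (intro exI[of _ k] exI[of _ "insert j X"]) (auto simp: normal_pair_def)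
  qed
qed

lemma rel_cong_normal_form:
  assumes n: "n \<ge> 1"
  shows "w \<in> lists (alph n) \<Longrightarrow> \<exists>k X. normal_pair n k X \<and> rel_cong n w (nf_word n k X)"
proof (induction w)
  case Nil
  have "nf_word n 0 {} = []" by (simp add: nf_word_def idem_word_def)
  with n show ?case by (intro exI[of _ 0] exI[of _ "{}"]) (auto simp: normal_pair_def cong_closure.refl)
next
  case (Cons a w)
  then obtain k X where nf: "normal_pair n k X" and w: "rel_cong n w (nf_word n k X)" by auto
  have a: "a \<in> alph n" using Cons.prems by simp
  have "\<exists>k' X'. normal_pair n k' X' \<and> rel_cong n (a # nf_word n k X) (nf_word n k' X')"
    using a G_Cons_nf_word[OF n nf] E_Cons_nf_word[OF n _ nf] by (cases a) (auto simp: alph_def)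
  then obtain k' X' where nf': "normal_pair n k' X'"
    and step: "rel_cong n (a # nf_word n k X) (nf_word n k' X')" by blast
  have "rel_cong n (a # w) (a # nf_word n k X)"
    using a cong_closure_append_left[OF w, of "[a]"] by simp
  also note step
  finally show ?case using nf' by blast
qed

lemma word_map_Rel: assumes n: "n \<ge> 1" and r: "(u, v) \<in> Rel n" shows "word_map n u = word_map n v"
  using r unfolding Rel_def
proof (elim UnE)
  assume "(u, v) \<in> R1 n"
  moreover have "rot_on n {1..n} n = rot_on n {1..n} 0" by (simp add: rot_on_def rot_n rot_0 fun_eq_iff)
  ultimately show ?thesis
    using word_map_replicate_G[OF n, of n] word_map_replicate_G[OF n, of 0] by (auto simp: R1_def)
next
  assume "(u, v) \<in> R2 n"
  then obtain i where uv: "u = map E [i, i]" "v = map E [i]" by (auto simp: R2_def)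
  show ?thesis unfolding uv word_map_map_E by simp
next
  assume "(u, v) \<in> R3 n"
  then obtain i j where uv: "u = map E [i, j]" "v = map E [j, i]" by (auto simp: R3_def)
  show ?thesis unfolding uv word_map_map_E by auto
next
  assume "(u, v) \<in> R4 n"
  then show ?thesis
    by (auto simp: R4_def word_map_Cons pmult_def phi_def gperm_def eid_def pid_def map_comp_def fun_eq_iff)
next
  assume "(u, v) \<in> R5 n"
  then have uv: "u = G # map E [1..<n+1]" "v = map E [1..<n+1]" by (auto simp: R5_def)
  show ?thesis
    unfolding uv word_map_Cons word_map_map_E
    by (auto simp: pmult_def map_comp_def fun_eq_iff split: option.splits)
qed

lemma word_map_rel_cong: "n \<ge> 1 \<Longrightarrow> rel_cong n u v \<Longrightarrow> word_map n u = word_map n v"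
  by (erule cong_closure_subset_kernel) (simp_all add: word_map_Rel word_map_append)

lemma word_map_in_CIn: assumes n: "n \<ge> 1" and w: "w \<in> lists (alph n)" shows "word_map n w \<in> CIn n"
proof -
  obtain k X where "normal_pair n k X" "rel_cong n w (nf_word n k X)"
    using rel_cong_normal_form[OF n w] by blast
  with n show ?thesis
    by (simp add: word_map_rel_cong word_map_nf_word nf_map_in_CIn normal_pair_def)
qed

lemma CIn_eq_word_map: "n \<ge> 1 \<Longrightarrow> \<alpha> \<in> CIn n \<Longrightarrow> \<exists>w \<in> lists (alph n). word_map n w = \<alpha>"
  by (metis CIn_eq_nf_map word_map_nf_word nf_word_lists)

lemma rel_cong_if_word_map_eq:
  assumes n: "n \<ge> 1" and uv: "u \<in> lists (alph n)" "v \<in> lists (alph n)"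
    and eq: "word_map n u = word_map n v"
  shows "rel_cong n u v"
proof -
  obtain k X where nf: "normal_pair n k X" and u: "rel_cong n u (nf_word n k X)"
    using rel_cong_normal_form[OF n uv(1)] by blast
  obtain k' X' where nf': "normal_pair n k' X'" and v: "rel_cong n v (nf_word n k' X')"
    using rel_cong_normal_form[OF n uv(2)] by blast
  have "nf_map n k X = nf_map n k' X'"
    using word_map_rel_cong[OF n u] word_map_rel_cong[OF n v] eq by (metis word_map_nf_word[OF n])
  then have "nf_word n k X = nf_word n k' X'"
    using nf_map_inj[OF n nf nf'] by simp
  with u v show ?thesis by (metis cong_closure.sym cong_closure.trans)
qed

lemma word_map_eq_iff_rel_cong:
  "n \<ge> 1 \<Longrightarrow> u \<in> lists (alph n) \<Longrightarrow> v \<in> lists (alph n) \<Longrightarrow>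
    word_map n u = word_map n v \<longleftrightarrow> rel_cong n u v"
  using rel_cong_if_word_map_eq word_map_rel_cong by blast

lemma word_map_image: "n \<ge> 1 \<Longrightarrow> {word_map n w | w. w \<in> lists (alph n)} = CIn n"
  using word_map_in_CIn CIn_eq_word_map by blast

lemma inj_on_phi: "inj_on (phi n) (alph n)"
proof -
  have "gperm n \<noteq> eid n i" if "i \<in> {1..n}" for i
  proof
    assume "gperm n = eid n i"
    then have "gperm n i = eid n i i" by simp
    with that show False by (auto simp: gperm_def eid_def split: if_splits)
  qed
  moreover have "eid n i \<noteq> eid n j" if "i \<in> {1..n}" "i \<noteq> j" for i j
  proof
    assume "eid n i = eid n j"
    then have "eid n i i = eid n j i" by simp
    with that show False by (auto simp: eid_def)
  qed
  ultimately show ?thesis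
    by (auto simp: inj_on_def alph_def phi_def) metis+
qed

section \<open>Counting generators and relations\<close>

lemma card_alph: "card (alph n) = n + 1"
proof -
  have "inj_on E {1..n}" by (auto simp: inj_on_def)
  moreover have "G \<notin> E ` {1..n}" by auto
  ultimately show ?thesis by (simp add: alph_def card_image)
qed

definition increasing_pairs :: "nat \<Rightarrow> (nat \<times> nat) set" where
  "increasing_pairs n = {(i, j). 1 \<le> i \<and> i < j \<and> j \<le> n}"

lemma finite_increasing_pairs: "finite (increasing_pairs n)"
  by (rule finite_subset[of _ "{1..n} \<times> {1..n}"]) (auto simp: increasing_pairs_def)

lemma card_increasing_pairs: "card (increasing_pairs n) * 2 = n * (n - 1)"
proof (induction n)
  case 0
  have "increasing_pairs 0 = {}" by (auto simp: increasing_pairs_def)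
  then show ?case by simp
next
  case (Suc n)
  have "increasing_pairs (Suc n) = increasing_pairs n \<union> (\<lambda>i. (i, Suc n)) ` {1..n}"
    by (auto simp: increasing_pairs_def)
  moreover have "increasing_pairs n \<inter> (\<lambda>i. (i, Suc n)) ` {1..n} = {}"
    by (auto simp: increasing_pairs_def)
  moreover have "card ((\<lambda>i. (i, Suc n)) ` {1..n}) = n"
    by (simp add: card_image inj_on_def)
  ultimately have "card (increasing_pairs (Suc n)) = card (increasing_pairs n) + n"
    by (simp add: card_Un_disjoint finite_increasing_pairs)
  with Suc show ?case by (cases n) (auto simp: algebra_simps)
qed

lemma card_R4: assumes n: "n \<ge> 1" shows "card (R4 n) = n"
proof -
  have "R4 n = insert ([G, E 1], [E n, G]) ((\<lambda>i. ([G, E (i + 1)], [E i, G])) ` {1..n-1})"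
    by (auto simp: R4_def)
  moreover have "card ((\<lambda>i. ([G, E (i + 1)], [E i, G])) ` {1..n-1}) = n - 1"
    by (simp add: card_image inj_on_def)
  moreover have "([G, E 1], [E n, G]) \<notin> (\<lambda>i. ([G, E (i + 1)], [E i, G])) ` {1..n-1}"
    by auto
  ultimately show ?thesis
    using n by (simp add: card_insert_disjoint)
qed

lemma card_Rel: assumes n: "n \<ge> 1" shows "card (Rel n) = (n^2 + 3*n + 4) div 2"
proof -
  have R2: "R2 n = (\<lambda>i. ([E i, E i], [E i])) ` {1..n}"
    by (auto simp: R2_def)
  have R3: "R3 n = (\<lambda>(i, j). ([E i, E j], [E j, E i])) ` increasing_pairs n"
    by (auto simp: R3_def increasing_pairs_def)
  have "inj_on (\<lambda>(i, j). ([E i, E j], [E j, E i])) (increasing_pairs n)"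
    by (auto simp: inj_on_def)
  then have card: "card (R1 n) = 1" "card (R2 n) = n" "card (R3 n) = card (increasing_pairs n)"
    "card (R4 n) = n" "card (R5 n) = 1"
    using card_R4[OF n] by (auto simp: R1_def R5_def R2 R3 card_image inj_on_def)
  have finite: "finite (R1 n)" "finite (R2 n)" "finite (R3 n)" "finite (R4 n)" "finite (R5 n)"
    using card(4) n finite_increasing_pairs
    by (auto simp: R1_def R5_def R2 R3 intro: card_ge_0_finite)
  have "R1 n \<inter> R2 n = {}" "(R1 n \<union> R2 n) \<inter> R3 n = {}" "(R1 n \<union> R2 n \<union> R3 n) \<inter> R4 n = {}"
    by (auto simp: R1_def R2_def R3_def R4_def Cons_replicate_eq)
  moreover have "(R1 n \<union> R2 n \<union> R3 n \<union> R4 n) \<inter> R5 n = {}"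
    using n by (cases n) (auto simp: R1_def R2_def R3_def R4_def R5_def Cons_replicate_eq upt_rec)
  ultimately have "card (Rel n) = 2 * n + 2 + card (increasing_pairs n)"
    unfolding Rel_def by (simp add: card_Un_disjoint card finite)
  with card_increasing_pairs[of n] n show ?thesis
    by (cases n) (auto simp: power2_eq_square algebra_simps)
qed

theorem theorem2p6:
  fixes n :: nat
  assumes "n \<ge> 1"
  shows "defines_monoid (alph n) (Rel n) pmult (pid n) (CIn n) (phi n)
         \<and> card (alph n) = n + 1
         \<and> card (Rel n) = (n^2 + 3*n + 4) div 2"
proof -
  have word_map: "foldl pmult (pid n) (map (phi n) w) = word_map n w" for w
    by (simp add: word_map_def)
  have "phi n a \<in> CIn n" if "a \<in> alph n" for a
    using word_map_in_CIn[OF assms, of "[a]"] that by (simp add: word_map_single)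
  then show ?thesis
    unfolding defines_monoid_def word_map
    using Rel_lists[OF assms] inj_on_phi word_map_image[OF assms] word_map_eq_iff_rel_cong[OF assms]
      card_alph card_Rel[OF assms]
    by auto
qed

end
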